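(* Let $X_1,\ldots,X_n$ be independent and uniformly distributed on $\{1,\ldots,n\}$ under $\mathbb{P}$. For a prime $p$ let $Y_p:=\#\{1\le i\le n:p\mid X_i\}$ and $S(k_1,k_2):=\{p\in\mathcal{P}:k_1<p\le k_2\}$. Then for every $\epsilon>0$, for all sufficiently large $k_1\le k_2$ and all sufficiently large $n\ge k_2$, \[ \frac1n\log\mathbb{P}\left(\sum_{p\in S(k_1,k_2)}Y_{p}^{2}>\epsilon n^{2}\right)\leq4\log\log k_{2}+4-\frac{\log(k_{1})}{8}\epsilon. \]
   Context: $\mathcal{P}$ denotes the set of primes. (The paper's displayed statement omits the factor $\frac1n\log$, which its proof establishes.) *)

theory Defs
  imports "HOL-Probability.Probability"
begin

definition X_dist :: "nat \<Rightarrow> (nat \<Rightarrow> nat) pmf" where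
  "X_dist n = Pi_pmf {1..n} 0 (\<lambda>_. pmf_of_set {1..n})"

definition Y :: "nat \<Rightarrow> nat \<Rightarrow> (nat \<Rightarrow> nat) \<Rightarrow> nat" where
  "Y n p X = card {i \<in> {1..n}. p dvd X i}"

definition S :: "nat \<Rightarrow> nat \<Rightarrow> nat set" where
  "S k1 k2 = {p. prime p \<and> k1 < p \<and> p \<le> k2}"

end

theory Submission
  imports Defs "HOL-Real_Asymp.Real_Asymp"
begin

text \<open>Chernoff's method: for a set T of primes and z > 1, the expectation of z^(\<Sum>p\<in>T. Y p)
  factorises over the n independent coordinates, and expanding z^#{p \<in> T. p dvd x} over the
  subsets of T bounds it by exp (n (z - 1) \<Sum>p\<in>T. 1/p). A Chebyshev-type estimate gives
  \<Sum>1/p \<le> 6 ln ln k2 + 4 over the primes in (k1, k2]. Now if \<Sum> Y p^2 > \<epsilon> n^2, then either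
  \<Sum> Y p \<ge> K n, which z = e^2 makes exponentially unlikely, or some set of at most
  2 K^2 / \<epsilon> \<le> sqrt k1 primes carries \<Sum> Y p \<ge> \<epsilon> n / 2, which z = sqrt k1 makes unlikely;
  there are at most 2^n such sets.\<close>

lemma prod_primes_dvd:
  fixes B :: "nat set"
  assumes "finite B" "\<forall>p\<in>B. prime p" "\<forall>p\<in>B. p dvd x"
  shows "\<Prod>B dvd x"
  using assms
proof (induction B rule: finite_induct)
  case empty then show ?case by simp
next
  case (insert p B)
  have "\<not> p dvd \<Prod>B"
  proof
    assume "p dvd \<Prod>B"
    then obtain q where "q \<in> B" "p dvd q" using insert prime_dvd_prod_iff[of B p id] by auto
    then have "p = q" using insert by (metis insert_iff primes_dvd_imp_eq)
    then show False using insert \<open>q \<in> B\<close> by auto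
  qed
  then have "coprime p (\<Prod>B)" using insert by (simp add: prime_imp_coprime)
  then show ?case using insert by (simp add: divides_mult)
qed

lemma card_multiples:
  fixes d n :: nat
  assumes "d > 0"
  shows "card {x\<in>{1..n}. d dvd x} = n div d"
proof -
  have "{x\<in>{1..n}. d dvd x} = (\<lambda>k. d * k) ` {1..n div d}"
  proof (intro equalityI subsetI)
    fix x assume "x \<in> {x\<in>{1..n}. d dvd x}"
    then obtain k where k: "x = d * k" "1 \<le> d * k" "d * k \<le> n" by auto
    then have "1 \<le> k" by (cases k) auto
    moreover have "k \<le> n div d" using k assms by (metis div_le_mono nonzero_mult_div_cancel_left neq0_conv)
    ultimately show "x \<in> (\<lambda>k. d * k) ` {1..n div d}" using k by auto
  next
    fix x assume "x \<in> (\<lambda>k. d * k) ` {1..n div d}"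
    then obtain k where "k \<in> {1..n div d}" "x = d * k" by blast
    then have k: "x = d * k" "1 \<le> k" "k \<le> n div d" by auto
    have "d * k \<le> d * (n div d)" using k by simp
    also have "\<dots> \<le> n" by simp
    finally show "x \<in> {x\<in>{1..n}. d dvd x}" using k assms by auto
  qed
  moreover have "inj_on (\<lambda>k. d * k) {1..n div d}" using assms by (auto simp: inj_on_def)
  ultimately show ?thesis by (simp add: card_image)
qed

lemma sum_ln_prime_divisors_le:
  fixes P :: "nat set"
  assumes "finite P" "\<forall>p\<in>P. prime p" "m > 0"
  shows "(\<Sum>p | p \<in> P \<and> p dvd m. ln (real p)) \<le> ln (real m)"
proof -
  define B where "B = {p\<in>P. p dvd m}"
  have finB: "finite B" and prB: "\<forall>p\<in>B. prime p" using assms(1,2) unfolding B_def by auto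
  have "\<Prod>B dvd m" using prod_primes_dvd[OF finB prB] unfolding B_def by auto
  then have "\<Prod>B \<le> m" using assms(3) by (rule dvd_imp_le)
  moreover have "\<Prod>B > 0" using prB by (simp add: prime_gt_0_nat prod_pos)
  ultimately have "ln (real (\<Prod>B)) \<le> ln (real m)"
    using assms(3) by (simp only: ln_le_cancel_iff of_nat_le_iff of_nat_0_less_iff)
  moreover have "ln (real (\<Prod>B)) = (\<Sum>p\<in>B. ln (real p))"
    using finB prB by (simp add: ln_prod prime_gt_0_nat)
  ultimately show ?thesis unfolding B_def by simp
qed

text \<open>Counting the pairs (p, m) with p prime, m \<le> N and p dvd m in two ways.\<close>
lemma sum_primes_ln_mult_div_le:
  "(\<Sum>p | prime p \<and> p \<le> N. ln (real p) * real (N div p)) \<le> real N * ln (real N)"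
proof -
  define P where "P = {p::nat. prime p \<and> p \<le> N}"
  have finP: "finite P" and prP: "\<forall>p\<in>P. prime p" unfolding P_def by auto
  have "(\<Sum>p\<in>P. ln (real p) * real (N div p)) = (\<Sum>p\<in>P. \<Sum>m | m \<in> {1..N} \<and> p dvd m. ln (real p))"
  proof (intro sum.cong refl)
    fix p assume "p \<in> P"
    then have "card {m\<in>{1..N}. p dvd m} = N div p"
      by (intro card_multiples) (auto simp: P_def prime_gt_0_nat)
    then show "ln (real p) * real (N div p) = (\<Sum>m | m \<in> {1..N} \<and> p dvd m. ln (real p))"
      by simp
  qed
  also have "\<dots> = (\<Sum>m\<in>{1..N}. \<Sum>p | p \<in> P \<and> p dvd m. ln (real p))"
    by (rule sum.swap_restrict[OF finP]) simp
  also have "\<dots> \<le> (\<Sum>m\<in>{1..N}. ln (real m))"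
    by (intro sum_mono sum_ln_prime_divisors_le[OF finP prP]) auto
  also have "\<dots> \<le> (\<Sum>m\<in>{1..N}. ln (real N))"
    by (intro sum_mono) auto
  finally show ?thesis unfolding P_def by simp
qed

lemma sum_primes_ln_over_self_le:
  assumes "N \<ge> 1"
  shows "(\<Sum>p | prime p \<and> p \<le> N. ln (real p) / real p) \<le> 2 * ln (real N)"
proof -
  define P where "P = {p::nat. prime p \<and> p \<le> N}"
  have "(\<Sum>p\<in>P. ln (real p) / real p) \<le> (\<Sum>p\<in>P. 2 / real N * (ln (real p) * real (N div p)))"
  proof (rule sum_mono)
    fix p assume "p \<in> P"
    then have p: "p \<ge> 2" "p \<le> N" unfolding P_def using prime_ge_2_nat by auto
    have "N mod p < p" using p by simp
    then have "N < p * (N div p) + p" using mult_div_mod_eq[of p N] by linarith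
    also have "\<dots> \<le> 2 * p * (N div p)" using p by (auto simp: Suc_le_eq div_greater_zero_iff)
    finally have "real N \<le> 2 * real p * real (N div p)"
      by (metis of_nat_le_iff of_nat_mult of_nat_numeral less_imp_le)
    then have "ln (real p) * real N \<le> ln (real p) * (2 * real p * real (N div p))"
      using p by (intro mult_left_mono) auto
    then show "ln (real p) / real p \<le> 2 / real N * (ln (real p) * real (N div p))"
      using assms p by (simp add: field_simps)
  qed
  also have "\<dots> = 2 / real N * (\<Sum>p\<in>P. ln (real p) * real (N div p))"
    by (simp add: sum_distrib_left)
  also have "\<dots> \<le> 2 / real N * (real N * ln (real N))"
    using sum_primes_ln_mult_div_le[of N] unfolding P_def by (intro mult_left_mono) auto
  also have "\<dots> = 2 * ln (real N)" using assms by simp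
  finally show ?thesis unfolding P_def .
qed

lemma finite_S [simp]: "finite (S a b)"
  unfolding S_def by (rule finite_subset[of _ "{..b}"]) auto

lemma card_S_le: "card (S a b) \<le> b"
proof -
  have "card (S a b) \<le> card {1..b}"
    unfolding S_def using prime_ge_1_nat by (intro card_mono) auto
  then show ?thesis by simp
qed

lemma sum_inverse_S_le_ln_ratio:
  assumes "a \<ge> 2" "b \<ge> 1"
  shows "(\<Sum>p\<in>S a b. 1 / real p) \<le> 2 * ln (real b) / ln (real a)"
proof -
  have la: "ln (real a) > 0" using assms by simp
  have "(\<Sum>p\<in>S a b. 1 / real p) \<le> (\<Sum>p\<in>S a b. ln (real p) / real p / ln (real a))"
  proof (rule sum_mono)
    fix p assume "p \<in> S a b"
    then have "a < p" unfolding S_def by auto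
    then have "ln (real a) \<le> ln (real p)" using assms by simp
    then show "1 / real p \<le> ln (real p) / real p / ln (real a)"
      using la \<open>a < p\<close> by (simp add: field_simps)
  qed
  also have "\<dots> = (\<Sum>p\<in>S a b. ln (real p) / real p) / ln (real a)"
    by (simp add: sum_divide_distrib)
  also have "\<dots> \<le> (\<Sum>p | prime p \<and> p \<le> b. ln (real p) / real p) / ln (real a)"
    using la by (intro divide_right_mono sum_mono2) (auto simp: S_def dest: prime_gt_0_nat)
  also have "\<dots> \<le> 2 * ln (real b) / ln (real a)"
    using sum_primes_ln_over_self_le[OF assms(2)] la by (intro divide_right_mono) auto
  finally show ?thesis .
qed

lemma sum_inverse_S_square_le:
  assumes "a \<ge> 2" "b \<le> a^2"
  shows "(\<Sum>p\<in>S a b. 1 / real p) \<le> 4"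
proof (cases "b = 0")
  case True
  then show ?thesis by (simp add: S_def)
next
  case False
  have "ln (real b) \<le> ln (real a ^ 2)"
    using assms False by (simp flip: of_nat_power)
  also have "\<dots> = 2 * ln (real a)" using assms by (simp add: ln_realpow)
  finally have "2 * ln (real b) / ln (real a) \<le> 4" using assms by (simp add: field_simps)
  then show ?thesis using sum_inverse_S_le_ln_ratio[OF assms(1), of b] False by simp
qed

text \<open>The range (a, a^(2^j)] splits into j ranges (c, c^2], each contributing at most 4.\<close>
lemma sum_inverse_S_le_iterated_square:
  assumes "a \<ge> 2" "b \<le> a^(2^j)"
  shows "(\<Sum>p\<in>S a b. 1 / real p) \<le> 4 * real j"
  using assms(2)
proof (induction j arbitrary: b)
  case 0
  then have "S a b = {}" unfolding S_def by auto
  then show ?case by simp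
next
  case (Suc j)
  define c where "c = a^(2^j)"
  have ac: "a \<le> c" unfolding c_def using assms(1) by (intro self_le_power) auto
  have "S a b = S a (min b c) \<union> S c b" and "S a (min b c) \<inter> S c b = {}"
    using ac unfolding S_def by auto
  then have "(\<Sum>p\<in>S a b. 1 / real p) = (\<Sum>p\<in>S a (min b c). 1 / real p) + (\<Sum>p\<in>S c b. 1 / real p)"
    by (simp add: sum.union_disjoint)
  also have "\<dots> \<le> 4 * real j + 4"
  proof (rule add_mono)
    show "(\<Sum>p\<in>S a (min b c). 1 / real p) \<le> 4 * real j"
      using Suc.IH[of "min b c"] c_def by simp
    have "b \<le> c^2" using Suc.prems unfolding c_def by (simp add: mult.commute flip: power_mult)
    then show "(\<Sum>p\<in>S c b. 1 / real p) \<le> 4"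
      using ac assms(1) by (intro sum_inverse_S_square_le) auto
  qed
  finally show ?case by simp
qed

lemma sum_inverse_S_le_ln_ln:
  assumes "3 \<le> a" "a \<le> b"
  shows "(\<Sum>p\<in>S a b. 1 / real p) \<le> 6 * ln (ln (real b)) + 4"
proof -
  have "exp 1 \<le> real b" using exp_le assms by linarith
  then have lb: "ln (real b) \<ge> 1" using ln_ge_iff[of "real b" 1] assms by simp
  define j where "j = nat \<lceil>log 2 (ln (real b))\<rceil>"
  have lg0: "log 2 (ln (real b)) \<ge> 0" using lb by simp
  have j: "log 2 (ln (real b)) \<le> real j" "real j \<le> log 2 (ln (real b)) + 1"
    unfolding j_def using lg0 by linarith+
  have "ln (real b) = 2 powr (log 2 (ln (real b)))" using lb by simp
  also have "\<dots> \<le> 2 powr (real j)" using j by (intro powr_mono) auto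
  finally have ln_b: "ln (real b) \<le> real (2^j)" by (simp add: powr_realpow)
  have "real b = exp (ln (real b))" using assms by simp
  also have "\<dots> \<le> exp (real (2^j))" using ln_b by simp
  also have "\<dots> = exp 1 ^ (2^j)" by (simp flip: exp_of_nat_mult)
  also have "\<dots> \<le> real a ^ (2^j)"
    using assms exp_le by (intro power_mono) auto
  finally have "b \<le> a^(2^j)" by (simp flip: of_nat_power)
  then have "(\<Sum>p\<in>S a b. 1 / real p) \<le> 4 * real j"
    using assms by (intro sum_inverse_S_le_iterated_square) auto
  also have "\<dots> \<le> 4 * (ln (ln (real b)) / ln 2) + 4"
    using j by (simp add: log_def)
  also have "\<dots> \<le> 6 * ln (ln (real b)) + 4"
  proof -
    have "ln (ln (real b)) * 2 \<le> ln (ln (real b)) * (3 * ln 2)"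
      using lb ln2_ge_two_thirds by (intro mult_left_mono) auto
    then have "ln (ln (real b)) / ln 2 \<le> ln (ln (real b)) * (3/2)"
      by (simp add: divide_le_eq)
    then show ?thesis by simp
  qed
  finally show ?thesis .
qed

lemma prod_of_bool:
  "finite A \<Longrightarrow> (\<Prod>x\<in>A. of_bool (P x) :: 'a::comm_semiring_1) = of_bool (\<forall>x\<in>A. P x)"
  by (induction A rule: finite_induct) auto

lemma pow_card_eq_sum_Pow:
  fixes z :: "'a::comm_ring_1"
  assumes "finite T"
  shows "z ^ card {p\<in>T. Q p} = (\<Sum>B\<in>Pow T. (z - 1) ^ card B * of_bool (\<forall>p\<in>B. Q p))"
proof -
  have "z ^ card {p\<in>T. Q p} = (\<Prod>p | p \<in> T \<and> Q p. (z - 1) * of_bool (Q p) + 1)"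
    by simp
  also have "\<dots> = (\<Prod>p\<in>T. (z - 1) * of_bool (Q p) + 1)"
    by (rule prod.mono_neutral_left) (auto simp: assms)
  also have "\<dots> = (\<Sum>B\<in>Pow T. (\<Prod>p\<in>B. (z - 1) * of_bool (Q p)) * (\<Prod>p\<in>T - B. 1))"
    by (rule prod_add[OF assms])
  also have "\<dots> = (\<Sum>B\<in>Pow T. (z - 1) ^ card B * of_bool (\<forall>p\<in>B. Q p))"
  proof (intro sum.cong refl)
    fix B assume "B \<in> Pow T"
    then have "finite B" using assms finite_subset by auto
    then show "(\<Prod>p\<in>B. (z - 1) * of_bool (Q p)) * (\<Prod>p\<in>T - B. 1) = (z - 1) ^ card B * of_bool (\<forall>p\<in>B. Q p)"
      by (simp add: prod.distrib prod_of_bool)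
  qed
  finally show ?thesis .
qed

lemma card_common_multiples_le:
  fixes B :: "nat set"
  assumes "finite B" "\<forall>p\<in>B. prime p"
  shows "real (card {x\<in>{1..n}. \<forall>p\<in>B. p dvd x}) \<le> real n / (\<Prod>p\<in>B. real p)"
proof -
  have pos: "\<Prod>B > 0" using assms(2) by (simp add: prime_gt_0_nat prod_pos)
  have "card {x\<in>{1..n}. \<forall>p\<in>B. p dvd x} \<le> card {x\<in>{1..n}. \<Prod>B dvd x}"
    by (intro card_mono) (auto intro: prod_primes_dvd[OF assms])
  also have "\<dots> = n div \<Prod>B" using card_multiples[OF pos] .
  finally have "real (card {x\<in>{1..n}. \<forall>p\<in>B. p dvd x}) \<le> real (n div \<Prod>B)" by simp
  also have "\<dots> \<le> real n / real (\<Prod>B)" by (rule of_nat_div_le_of_nat)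
  finally show ?thesis by simp
qed

lemma sum_pow_card_prime_divisors_le:
  fixes T :: "nat set" and z :: real
  assumes T: "finite T" "\<forall>p\<in>T. prime p" and z: "z \<ge> 1"
  shows "(\<Sum>x\<in>{1..n}. z ^ card {p\<in>T. p dvd x}) \<le> real n * exp ((z - 1) * (\<Sum>p\<in>T. 1 / real p))"
proof -
  have "(\<Sum>x\<in>{1..n}. z ^ card {p\<in>T. p dvd x})
        = (\<Sum>x\<in>{1..n}. \<Sum>B\<in>Pow T. (z - 1) ^ card B * of_bool (\<forall>p\<in>B. p dvd x))"
    by (simp only: pow_card_eq_sum_Pow[OF T(1)])
  also have "\<dots> = (\<Sum>B\<in>Pow T. (z - 1) ^ card B * real (card {x\<in>{1..n}. \<forall>p\<in>B. p dvd x}))"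
    by (subst sum.swap) (simp add: sum_distrib_left[symmetric] Int_def)
  also have "\<dots> \<le> (\<Sum>B\<in>Pow T. (z - 1) ^ card B * (real n / (\<Prod>p\<in>B. real p)))"
    using T z by (intro sum_mono mult_left_mono card_common_multiples_le) (auto dest: finite_subset)
  also have "\<dots> = real n * (\<Prod>p\<in>T. (z - 1) / real p + 1)"
    by (simp add: prod_add[OF T(1)] sum_distrib_left prod_dividef mult.commute)
  also have "\<dots> \<le> real n * (\<Prod>p\<in>T. exp ((z - 1) / real p))"
    using z by (intro mult_left_mono prod_mono conjI) (auto simp: add.commute exp_ge_add_one_self)
  also have "\<dots> = real n * exp ((z - 1) * (\<Sum>p\<in>T. 1 / real p))"
    by (simp add: exp_sum[OF T(1)] sum_distrib_left)
  finally show ?thesis .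
qed

lemma finite_set_X_dist: "n \<ge> 1 \<Longrightarrow> finite (set_pmf (X_dist n))"
  unfolding X_dist_def by (subst set_Pi_pmf) auto

lemma Y_le: "Y n p X \<le> n"
proof -
  have "Y n p X \<le> card {1..n}" unfolding Y_def by (rule card_mono) auto
  then show ?thesis by simp
qed

lemma sum_Y_eq_sum_card_dvd:
  assumes "finite T"
  shows "(\<Sum>p\<in>T. Y n p X) = (\<Sum>i\<in>{1..n}. card {p\<in>T. p dvd X i})"
proof -
  have "(\<Sum>p\<in>T. Y n p X) = (\<Sum>p\<in>T. \<Sum>i\<in>{1..n}. of_bool (p dvd X i))"
    by (simp add: Y_def Int_def)
  also have "\<dots> = (\<Sum>i\<in>{1..n}. \<Sum>p\<in>T. of_bool (p dvd X i))"
    by (rule sum.swap)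
  also have "\<dots> = (\<Sum>i\<in>{1..n}. card {p\<in>T. p dvd X i})"
    using assms by (simp add: Int_def)
  finally show ?thesis .
qed

lemma prob_sum_Y_ge_le:
  fixes T :: "nat set" and z a :: real
  assumes T: "finite T" "\<forall>p\<in>T. prime p" and z: "z > 1" and n: "n \<ge> 1"
  shows "measure_pmf.prob (X_dist n) {X. real (\<Sum>p\<in>T. Y n p X) \<ge> a}
           \<le> exp (real n * (z - 1) * (\<Sum>p\<in>T. 1 / real p)) / z powr a"
proof -
  define c where "c = (\<lambda>x::nat. card {p\<in>T. p dvd x})"
  define u where "u = (\<lambda>X::nat \<Rightarrow> nat. \<Prod>i\<in>{1..n}. z ^ c (X i))"
  have "{X. real (\<Sum>p\<in>T. Y n p X) \<ge> a} \<subseteq> {X \<in> space (measure_pmf (X_dist n)). u X \<ge> z powr a}"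
  proof safe
    fix X assume "a \<le> real (\<Sum>p\<in>T. Y n p X)"
    then have "z powr a \<le> z powr real (\<Sum>p\<in>T. Y n p X)" using z by (intro powr_mono) auto
    also have "\<dots> = z ^ (\<Sum>p\<in>T. Y n p X)" using z by (intro powr_realpow) auto
    also have "\<dots> = u X" unfolding u_def c_def by (simp add: sum_Y_eq_sum_card_dvd[OF T(1)] power_sum)
    finally show "z powr a \<le> u X" .
  qed simp
  then have "measure_pmf.prob (X_dist n) {X. real (\<Sum>p\<in>T. Y n p X) \<ge> a}
        \<le> measure_pmf.prob (X_dist n) {X \<in> space (measure_pmf (X_dist n)). u X \<ge> z powr a}"
    by (intro measure_pmf.finite_measure_mono) simp_all
  also have "\<dots> \<le> measure_pmf.expectation (X_dist n) u / z powr a"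
    using z by (intro integral_Markov_inequality_measure integrable_measure_pmf_finite finite_set_X_dist n)
      (auto simp: u_def intro!: AE_I2 prod_nonneg)
  also have "measure_pmf.expectation (X_dist n) u =
             (\<Prod>i\<in>{1..n}. measure_pmf.expectation (pmf_of_set {1..n}) (\<lambda>v. z ^ c v))"
    unfolding u_def X_dist_def
    by (rule expectation_prod_Pi_pmf[where f = "\<lambda>_ v. z ^ c v"])
       (use z n in \<open>auto intro!: integrable_measure_pmf_finite\<close>)
  also have "\<dots> = ((\<Sum>x\<in>{1..n}. z ^ c x) / real n) ^ n"
    using n by (simp add: integral_pmf_of_set)
  also have "\<dots> \<le> exp ((z - 1) * (\<Sum>p\<in>T. 1 / real p)) ^ n"
  proof (intro power_mono)
    show "0 \<le> (\<Sum>x\<in>{1..n}. z ^ c x) / real n" using z by (auto intro!: sum_nonneg divide_nonneg_nonneg)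
    show "(\<Sum>x\<in>{1..n}. z ^ c x) / real n \<le> exp ((z - 1) * (\<Sum>p\<in>T. 1 / real p))"
      using sum_pow_card_prime_divisors_le[OF T, of z n] z n unfolding c_def
      by (simp add: divide_le_eq mult.commute)
  qed
  also have "\<dots> = exp (real n * (z - 1) * (\<Sum>p\<in>T. 1 / real p))"
    by (simp add: exp_of_nat_mult[symmetric] mult.assoc)
  finally show ?thesis using z by (simp add: divide_right_mono)
qed

text \<open>The witness is T = {p. y p \<ge> \<delta> c} with \<delta> = \<epsilon> / (2 K): the other terms contribute at most
  \<epsilon> c^2 / 2 to the squares, and T is small because each of its members carries \<delta> c of the mass.\<close>
lemma heavy_subset_if_sum_squares_gt:
  fixes y :: "'a \<Rightarrow> real" and c \<epsilon> K :: real
  assumes A: "finite A" and y: "\<And>p. p \<in> A \<Longrightarrow> 0 \<le> y p \<and> y p \<le> c" and \<epsilon>: "\<epsilon> > 0"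
    and sum_lt: "(\<Sum>p\<in>A. y p) < K * c" and sq_gt: "(\<Sum>p\<in>A. (y p)^2) > \<epsilon> * c^2"
  shows "\<exists>T\<subseteq>A. real (card T) \<le> 2 * K^2 / \<epsilon> \<and> \<epsilon> * c / 2 \<le> (\<Sum>p\<in>T. y p)"
proof -
  have c: "c > 0"
  proof (rule ccontr)
    assume "\<not> c > 0"
    then have "y p = 0" if "p \<in> A" for p using y[OF that] by linarith
    then have "(\<Sum>p\<in>A. (y p)^2) = 0" by simp
    moreover have "\<epsilon> * c^2 \<ge> 0" using \<epsilon> by simp
    ultimately show False using sq_gt by linarith
  qed
  have "0 \<le> (\<Sum>p\<in>A. y p)" using y by (simp add: sum_nonneg)
  then have "0 < K * c" using sum_lt by linarith
  then have K: "K > 0" using c by (simp add: zero_less_mult_iff)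
  define \<delta> where "\<delta> = \<epsilon> / (2 * K)"
  have \<delta>: "\<delta> > 0" unfolding \<delta>_def using \<epsilon> K by simp
  define T where "T = {p\<in>A. \<delta> * c \<le> y p}"
  have TA: "T \<subseteq> A" unfolding T_def by auto
  have "(\<Sum>p\<in>A - T. (y p)^2) \<le> (\<Sum>p\<in>A - T. \<delta> * c * y p)"
    using y by (intro sum_mono) (auto simp: T_def power2_eq_square mult_right_mono)
  also have "\<dots> = \<delta> * c * (\<Sum>p\<in>A - T. y p)" by (simp add: sum_distrib_left)
  also have "\<dots> \<le> \<delta> * c * (\<Sum>p\<in>A. y p)"
    using \<delta> c y A by (intro mult_left_mono sum_mono2) auto
  also have "\<dots> \<le> \<delta> * c * (K * c)" using \<delta> c sum_lt by (intro mult_left_mono) auto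
  also have "\<dots> = \<epsilon> * c^2 / 2" unfolding \<delta>_def using K by (simp add: power2_eq_square)
  finally have light: "(\<Sum>p\<in>A - T. (y p)^2) \<le> \<epsilon> * c^2 / 2" .
  have "(\<Sum>p\<in>T. (y p)^2) \<le> (\<Sum>p\<in>T. c * y p)"
    using y TA by (intro sum_mono) (auto simp: power2_eq_square intro: mult_right_mono)
  then have heavy: "(\<Sum>p\<in>T. (y p)^2) \<le> c * (\<Sum>p\<in>T. y p)" by (simp add: sum_distrib_left)
  have "(\<Sum>p\<in>A. (y p)^2) = (\<Sum>p\<in>T. (y p)^2) + (\<Sum>p\<in>A - T. (y p)^2)"
    using sum.subset_diff[OF TA A] by (simp add: add.commute)
  then have "\<epsilon> * c^2 / 2 < c * (\<Sum>p\<in>T. y p)" using sq_gt light heavy by linarith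
  then have "c * (\<epsilon> * c / 2) < c * (\<Sum>p\<in>T. y p)" by (simp add: power2_eq_square mult_ac)
  then have mass: "\<epsilon> * c / 2 \<le> (\<Sum>p\<in>T. y p)" using c by simp
  have "real (card T) * (\<delta> * c) \<le> (\<Sum>p\<in>T. y p)"
    using sum_mono[of T "\<lambda>_. \<delta> * c" y] by (simp add: T_def)
  also have "\<dots> \<le> (\<Sum>p\<in>A. y p)" using y A TA by (intro sum_mono2) auto
  finally have "real (card T) * \<delta> * c \<le> K * c" using sum_lt by simp
  then have "real (card T) \<le> K / \<delta>" using c \<delta> by (simp add: le_divide_eq)
  also have "K / \<delta> = 2 * K^2 / \<epsilon>" unfolding \<delta>_def using K \<epsilon> by (simp add: power2_eq_square)
  finally show ?thesis using TA mass by blast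
qed

lemma prob_sum_sq_Y_gt_le:
  fixes A :: "nat set" and \<epsilon> K :: real
  assumes A: "finite A" and \<epsilon>: "\<epsilon> > 0"
  defines "\<T> \<equiv> {T. T \<subseteq> A \<and> real (card T) \<le> 2 * K^2 / \<epsilon>}"
  shows "measure_pmf.prob (X_dist n) {X. real (\<Sum>p\<in>A. (Y n p X)^2) > \<epsilon> * (real n)^2}
    \<le> measure_pmf.prob (X_dist n) {X. real (\<Sum>p\<in>A. Y n p X) \<ge> K * real n}
       + (\<Sum>T\<in>\<T>. measure_pmf.prob (X_dist n) {X. real (\<Sum>p\<in>T. Y n p X) \<ge> \<epsilon> * real n / 2})"
    (is "measure_pmf.prob _ ?E \<le> measure_pmf.prob _ ?E1 + (\<Sum>T\<in>\<T>. measure_pmf.prob _ (?ET T))")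
proof -
  have fin: "finite \<T>" unfolding \<T>_def by (rule finite_subset[of _ "Pow A"]) (auto simp: A)
  have "?E \<subseteq> ?E1 \<union> (\<Union>T\<in>\<T>. ?ET T)"
  proof
    fix X assume X: "X \<in> ?E"
    show "X \<in> ?E1 \<union> (\<Union>T\<in>\<T>. ?ET T)"
    proof (cases "X \<in> ?E1")
      case False
      then have "\<exists>T\<subseteq>A. real (card T) \<le> 2 * K^2 / \<epsilon> \<and> \<epsilon> * real n / 2 \<le> (\<Sum>p\<in>T. real (Y n p X))"
        using X by (intro heavy_subset_if_sum_squares_gt[OF A _ \<epsilon>]) (auto simp: Y_le)
      then show ?thesis unfolding \<T>_def by auto
    qed simp
  qed
  then have "measure_pmf.prob (X_dist n) ?E \<le> measure_pmf.prob (X_dist n) (?E1 \<union> (\<Union>T\<in>\<T>. ?ET T))"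
    by (intro measure_pmf.finite_measure_mono) simp_all
  also have "\<dots> \<le> measure_pmf.prob (X_dist n) ?E1 + measure_pmf.prob (X_dist n) (\<Union>T\<in>\<T>. ?ET T)"
    by (rule measure_Un_le) auto
  also have "measure_pmf.prob (X_dist n) (\<Union>T\<in>\<T>. ?ET T) \<le> (\<Sum>T\<in>\<T>. measure_pmf.prob (X_dist n) (?ET T))"
    by (rule measure_pmf.finite_measure_subadditive_finite[OF fin]) auto
  finally show ?thesis by simp
qed

lemma prob_sum_Y_ge_le_exp:
  fixes T :: "nat set" and a :: real
  assumes "finite T" "\<forall>p\<in>T. prime p" "n \<ge> 1"
  shows "measure_pmf.prob (X_dist n) {X. real (\<Sum>p\<in>T. Y n p X) \<ge> a}
           \<le> exp (8 * real n * (\<Sum>p\<in>T. 1 / real p) - 2 * a)"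
proof -
  define s where "s = (\<Sum>p\<in>T. 1 / real p)"
  have s: "s \<ge> 0" unfolding s_def by (auto intro: sum_nonneg)
  have "exp (2::real) = exp 1 * exp 1" by (simp flip: exp_add)
  also have "\<dots> \<le> 3 * 3" using exp_le by (intro mult_mono) auto
  finally have "exp (2::real) - 1 \<le> 8" by simp
  then have "real n * (exp 2 - 1) * s \<le> real n * 8 * s"
    using s by (intro mult_right_mono mult_left_mono) auto
  then have "exp (real n * (exp 2 - 1) * s) / exp 2 powr a \<le> exp (real n * 8 * s) / exp (2 * a)"
    by (simp add: powr_def divide_right_mono mult.commute)
  also have "\<dots> = exp (8 * real n * s - 2 * a)" by (simp add: exp_diff mult.commute)
  finally show ?thesis
    unfolding s_def using assms by (intro order.trans[OF prob_sum_Y_ge_le]) auto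
qed

lemma prob_sum_Y_ge_le_few_large_primes:
  fixes T :: "nat set" and b :: real
  assumes T: "finite T" "\<forall>p\<in>T. prime p \<and> k < p" and k: "2 \<le> k"
    and few: "real (card T) \<le> sqrt (real k)" and n: "n \<ge> 1"
  shows "measure_pmf.prob (X_dist n) {X. real (\<Sum>p\<in>T. Y n p X) \<ge> b}
           \<le> exp (real n - b * ln (real k) / 2)"
proof -
  define z where "z = sqrt (real k)"
  have z: "z > 1" "z * z = real k" unfolding z_def using k by auto
  have "(\<Sum>p\<in>T. 1 / real p) \<le> (\<Sum>p\<in>T. 1 / real k)"
    using T k by (intro sum_mono) (auto simp: frac_le)
  also have "\<dots> \<le> z / real k" using few unfolding z_def by (simp add: divide_right_mono)
  finally have "(z - 1) * (\<Sum>p\<in>T. 1 / real p) \<le> z * (z / real k)"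
    using z by (intro mult_mono) (auto intro: sum_nonneg)
  also have "\<dots> = 1" using z k by (simp add: field_simps)
  finally have "exp (real n * (z - 1) * (\<Sum>p\<in>T. 1 / real p)) \<le> exp (real n)"
    using mult_left_mono[of _ 1 "real n"] by (simp add: mult.assoc)
  moreover have "z powr b = exp (b * ln (real k) / 2)"
    unfolding z_def using k by (simp add: powr_def ln_sqrt)
  ultimately have "exp (real n * (z - 1) * (\<Sum>p\<in>T. 1 / real p)) / z powr b
      \<le> exp (real n) / exp (b * ln (real k) / 2)"
    by (simp add: divide_right_mono)
  also have "\<dots> = exp (real n - b * ln (real k) / 2)" by (simp add: exp_diff)
  finally show ?thesis using T z n by (intro order.trans[OF prob_sum_Y_ge_le]) auto
qed

lemma sum_prob_few_large_primes_le:
  fixes A :: "nat set" and b M :: real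
  assumes A: "finite A" "\<forall>p\<in>A. prime p \<and> k < p" "card A \<le> n" and k: "2 \<le> k"
    and M: "M \<le> sqrt (real k)" and n: "n \<ge> 1"
  shows "(\<Sum>T | T \<subseteq> A \<and> real (card T) \<le> M. measure_pmf.prob (X_dist n) {X. real (\<Sum>p\<in>T. Y n p X) \<ge> b})
           \<le> exp (2 * real n - b * ln (real k) / 2)"
proof -
  define \<T> where "\<T> = {T. T \<subseteq> A \<and> real (card T) \<le> M}"
  have "card \<T> \<le> card (Pow A)" unfolding \<T>_def using A by (intro card_mono) auto
  also have "\<dots> \<le> 2 ^ n" using A by (simp add: card_Pow power_increasing)
  finally have "real (card \<T>) \<le> 2 ^ n" by (simp flip: of_nat_le_iff)
  also have "\<dots> \<le> exp 1 ^ n" using exp_ge_add_one_self[of 1] by (intro power_mono) auto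
  finally have "real (card \<T>) \<le> exp 1 ^ n" .
  then have card: "real (card \<T>) \<le> exp (real n)" by (simp flip: exp_of_nat_mult)
  have "(\<Sum>T\<in>\<T>. measure_pmf.prob (X_dist n) {X. real (\<Sum>p\<in>T. Y n p X) \<ge> b})
        \<le> (\<Sum>T\<in>\<T>. exp (real n - b * ln (real k) / 2))"
    using A k M n unfolding \<T>_def
    by (intro sum_mono prob_sum_Y_ge_le_few_large_primes) (auto dest: finite_subset)
  also have "\<dots> \<le> exp (real n) * exp (real n - b * ln (real k) / 2)"
    using card by (simp add: mult_right_mono)
  finally show ?thesis by (simp add: \<T>_def flip: exp_add)
qed

lemma exp_neg_add_exp_le:
  fixes a x :: real
  assumes "a \<ge> 0" "x \<ge> 1 / 2"
  shows "exp (- a) + exp (2 * x - 2 * a) \<le> exp (4 * x - a)"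
proof -
  have "exp (- a) \<le> exp (2 * x - a)" "exp (2 * x - 2 * a) \<le> exp (2 * x - a)"
    using assms by simp_all
  then have "exp (- a) + exp (2 * x - 2 * a) \<le> 2 * exp (2 * x - a)" by linarith
  also have "\<dots> \<le> exp (2 * x) * exp (2 * x - a)"
  proof (rule mult_right_mono)
    show "2 \<le> exp (2 * x)" using exp_ge_add_one_self[of "2 * x"] assms(2) by linarith
  qed simp
  also have "\<dots> = exp (4 * x - a)" by (simp flip: exp_add)
  finally show ?thesis .
qed

text \<open>The threshold K = 4 s + \<epsilon> L / 16, with s the reciprocal prime sum, balances both terms of
  the decomposition: 2 K n - 8 s n = \<epsilon> n L / 8, and 2 K^2 / \<epsilon> \<le> sqrt k1 since K \<le> \<epsilon> L + 16.\<close>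
lemma prob_sum_sq_Y_gt_S_le_exp_add_exp:
  fixes \<epsilon> :: real and k1 k2 n :: nat
  defines "L \<equiv> ln (real k1)"
  assumes \<epsilon>: "\<epsilon> > 0" and k: "3 \<le> k1" "k1 \<le> k2" "k2 \<le> n"
    and k1_large: "2 * (\<epsilon> * L + 16)^2 / \<epsilon> \<le> sqrt (real k1)"
    and k2_small: "32 * ln (ln (real k2)) \<le> \<epsilon> * L"
  shows "measure_pmf.prob (X_dist n) {X. real (\<Sum>p\<in>S k1 k2. (Y n p X)^2) > \<epsilon> * (real n)^2}
           \<le> exp (- (real n * \<epsilon> * L / 8)) + exp (2 * real n - 2 * (real n * \<epsilon> * L / 8))"
proof -
  define s where "s = (\<Sum>p\<in>S k1 k2. 1 / real p)"
  define K where "K = 4 * s + \<epsilon> * L / 16"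
  have n: "n \<ge> 1" using k by simp
  have L: "L > 0" unfolding L_def using k by simp
  have "exp 1 \<le> real k2" using exp_le k by linarith
  then have "ln (ln (real k2)) \<ge> 0" using k by (simp add: ln_ge_iff)
  moreover have "s \<le> 6 * ln (ln (real k2)) + 4" unfolding s_def using k by (intro sum_inverse_S_le_ln_ln)
  moreover have "s \<ge> 0" unfolding s_def by (auto intro: sum_nonneg)
  ultimately have "0 \<le> K" "K \<le> \<epsilon> * L + 16"
    unfolding K_def using \<epsilon> L k2_small by (simp_all add: mult_nonneg_nonneg)
  then have "2 * K^2 / \<epsilon> \<le> 2 * (\<epsilon> * L + 16)^2 / \<epsilon>"
    using \<epsilon> by (intro divide_right_mono mult_left_mono power_mono) auto
  also have "\<dots> \<le> sqrt (real k1)" using k1_large .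
  finally have few: "2 * K^2 / \<epsilon> \<le> sqrt (real k1)" .
  have primes: "\<forall>p\<in>S k1 k2. prime p \<and> k1 < p" unfolding S_def by auto
  have "card (S k1 k2) \<le> n" using card_S_le[of k1 k2] k by linarith
  have "measure_pmf.prob (X_dist n) {X. real (\<Sum>p\<in>S k1 k2. (Y n p X)^2) > \<epsilon> * (real n)^2}
    \<le> measure_pmf.prob (X_dist n) {X. real (\<Sum>p\<in>S k1 k2. Y n p X) \<ge> K * real n}
       + (\<Sum>T | T \<subseteq> S k1 k2 \<and> real (card T) \<le> 2 * K^2 / \<epsilon>.
            measure_pmf.prob (X_dist n) {X. real (\<Sum>p\<in>T. Y n p X) \<ge> \<epsilon> * real n / 2})"
    using \<epsilon> by (intro prob_sum_sq_Y_gt_le) auto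
  also have "\<dots> \<le> exp (8 * real n * s - 2 * (K * real n)) + exp (2 * real n - \<epsilon> * real n / 2 * L / 2)"
  proof (rule add_mono)
    show "measure_pmf.prob (X_dist n) {X. real (\<Sum>p\<in>S k1 k2. Y n p X) \<ge> K * real n}
        \<le> exp (8 * real n * s - 2 * (K * real n))"
      unfolding s_def using primes n by (intro prob_sum_Y_ge_le_exp) auto
    show "(\<Sum>T | T \<subseteq> S k1 k2 \<and> real (card T) \<le> 2 * K^2 / \<epsilon>.
            measure_pmf.prob (X_dist n) {X. real (\<Sum>p\<in>T. Y n p X) \<ge> \<epsilon> * real n / 2})
        \<le> exp (2 * real n - \<epsilon> * real n / 2 * L / 2)"
      unfolding L_def using primes k n few \<open>card (S k1 k2) \<le> n\<close>
      by (intro sum_prob_few_large_primes_le) auto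
  qed
  also have "\<dots> = exp (- (real n * \<epsilon> * L / 8)) + exp (2 * real n - 2 * (real n * \<epsilon> * L / 8))"
    unfolding K_def by (simp add: algebra_simps)
  finally show ?thesis .
qed

lemma prob_sum_sq_Y_gt_S_le:
  fixes \<epsilon> :: real and k1 k2 n :: nat
  assumes \<epsilon>: "\<epsilon> > 0" and k: "3 \<le> k1" "k1 \<le> k2" "k2 \<le> n"
    and k1_large: "2 * (\<epsilon> * ln (real k1) + 16)^2 / \<epsilon> \<le> sqrt (real k1)"
  shows "measure_pmf.prob (X_dist n) {X. real (\<Sum>p\<in>S k1 k2. (Y n p X)^2) > \<epsilon> * (real n)^2}
           \<le> exp (real n * (4 * ln (ln (real k2)) + 4 - ln (real k1) / 8 * \<epsilon>))"
    (is "measure_pmf.prob _ ?E \<le> exp (real n * ?\<Phi>)")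
proof (cases "?\<Phi> \<ge> 0")
  case True
  have "measure_pmf.prob (X_dist n) ?E \<le> 1" by simp
  also have "1 \<le> exp (real n * ?\<Phi>)" using True by simp
  finally show ?thesis .
next
  case False
  define a where "a = real n * \<epsilon> * ln (real k1) / 8"
  have "a \<ge> 0" unfolding a_def using \<epsilon> k by simp
  have "exp 1 \<le> real k2" using exp_le k by linarith
  then have "ln (ln (real k2)) \<ge> 0" using k by (simp add: ln_ge_iff)
  have "measure_pmf.prob (X_dist n) ?E \<le> exp (- a) + exp (2 * real n - 2 * a)"
    unfolding a_def using False assms by (intro prob_sum_sq_Y_gt_S_le_exp_add_exp) (auto simp: mult.commute)
  also have "\<dots> \<le> exp (4 * real n - a)"
    using \<open>a \<ge> 0\<close> k by (intro exp_neg_add_exp_le) auto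
  also have "\<dots> \<le> exp (real n * ?\<Phi>)"
    using \<open>ln (ln (real k2)) \<ge> 0\<close> unfolding a_def by (simp add: algebra_simps)
  finally show ?thesis .
qed

theorem lemma3p6:
  fixes \<epsilon> :: real
  assumes "\<epsilon> > 0"
  shows "\<exists>K N::nat. \<forall>k1 k2 n::nat. K \<le> k1 \<longrightarrow> k1 \<le> k2 \<longrightarrow> k2 \<le> n \<longrightarrow> N \<le> n \<longrightarrow>
           measure_pmf.prob (X_dist n)
             {X. real (\<Sum>p\<in>S k1 k2. (Y n p X)^2) > \<epsilon> * (real n)^2}
           \<le> exp (real n * (4 * ln (ln (real k2)) + 4 - ln (real k1) / 8 * \<epsilon>))"
proof -
  have "eventually (\<lambda>x. 2 * (\<epsilon> * ln x + 16)^2 / \<epsilon> \<le> sqrt x) at_top"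
    using assms by real_asymp
  then obtain x0 where x0: "\<And>x. x \<ge> x0 \<Longrightarrow> 2 * (\<epsilon> * ln x + 16)^2 / \<epsilon> \<le> sqrt x"
    by (auto simp: eventually_at_top_linorder)
  show ?thesis
  proof (intro exI[of _ "max 3 (nat \<lceil>x0\<rceil>)"] exI[of _ 0] allI impI)
    fix k1 k2 n :: nat
    assume k: "max 3 (nat \<lceil>x0\<rceil>) \<le> k1" "k1 \<le> k2" "k2 \<le> n"
    then have "real k1 \<ge> x0" by linarith
    with k show "measure_pmf.prob (X_dist n) {X. real (\<Sum>p\<in>S k1 k2. (Y n p X)^2) > \<epsilon> * (real n)^2}
           \<le> exp (real n * (4 * ln (ln (real k2)) + 4 - ln (real k1) / 8 * \<epsilon>))"
      using assms x0 by (intro prob_sum_sq_Y_gt_S_le) auto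
  qed
qed

end
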